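(* Consider a \textsc{Brick} payment channel between two parties $A$ and $B$ with a committee of $n=3f+1$ Wardens and threshold $t=2f+1$, as described in the context. Assume the network is asynchronous, at most one of the two channel parties is Byzantine (the other is honest), and at most $f$ of the Wardens are Byzantine (the remaining Wardens are honest). Then \textsc{Brick} achieves safety: the channel can only close in the freshest committed state.
   Context: Setting and model. Two channel parties $A,B$ and a committee of Wardens $W_1,\dots,W_n$ with $n=3f+1$ and threshold $t=2f+1$. All participants are computationally bounded; communication channels are authenticated and secure, the hash function $H$ is cryptographically secure (collision and pre-image resistant), and signatures are unforgeable. The underlying blockchain supports smart contracts and satisfies persistence (once a transaction is in the permanent part of one honest party's chain it is in every honest party's chain) and liveness (a transaction given to all honest parties for long enough is eventually included on-chain). The network is asynchronous: every message sent by an honest party is eventually delivered to every honest party, with no known delay bound. Honest participants follow the protocol; Byzantine ones deviate arbitrarily. Channel states carry sequence numbers $1,2,\dots$; $s_i$ denotes the state with sequence number $i$; $\sigma(\cdot)$ denotes the joint signature of both $A$ and $B$, $\sigma_{W_j}(\cdot)$ a signature of Warden $W_j$. Protocol \textsc{Brick}. Open: both parties sign $open(H(W_1),\dots,H(W_n),t,s_1,F)$ (committing Warden identities, threshold and a closing fee $F$), the initial state is announced via Update/Consistent Broadcast, the opening is published on-chain, and each Warden locks collateral in the smart contract. Update: for a new state $s_i$ the parties sign and exchange $\{H(s_i,r_i),i\}$ with a random $r_i$; after receiving the counterparty's signature on it, each party sends its signature on $i$, forming the announcement $\{M,\sigma(M)\}$ with $M=i$. Consistent Broadcast: each party sends the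 announcement (with a small fee) to all Wardens; a Warden checks that both parties' signatures are present and that the sequence number is exactly one higher than its stored one; if it has already published a closing announcement it ignores the update, otherwise it replaces its stored announcement, signs $M$ and returns $\sigma_{W_j}(M)$. A party considers the state committed once it holds at least $t$ Warden signatures on $M$, and only then proceeds. Optimistic Close: a party requests closing on state $s$; both parties sign $s$ and it is published on-chain. Pessimistic Close: a party sends $close()$ to all Wardens; each Warden publishes on-chain $\sigma_{W_j}(M,close)$ for its stored announcement $M$ and stops signing updates; once $t$ such closing announcements are on-chain the party takes the maximum sequence number $i$ among them and publishes $s_i$, $r_i$ and both parties' signatures on $\{H(s_i,r_i),i\}$; after inclusion in a permanent block the smart contract recomputes $H(s_i,r_i)$, verifies both parties' signatures on $\{H(s_i,r_i),i\}$, verifies that the $t$ announcements come from the Wardens committed at opening and that $i$ is their maximum sequence number, and then closes the channel in $s_i$. Definitions. A state $s_i$ is valid if both parties have signed it, it is the freshest (no subsequent state $s_{i+1}$ is valid), and the committee has not invalidated it (the committee invalidates $s_i$ if the channel closes in $s_{i-1}$). A state is committed if it was signed by at least $2f+1$ Wardens, or it is valid and included in a block in the persistent part of the blockchain. A channel is closed when its locked funds are spent on-chain. Safety: the channel will only close in the freshest committed state. *)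

theory Defs
  imports Main
begin

datatype party = PA | PB

fun other :: "party \<Rightarrow> party" where
  "other PA = PB" | "other PB = PA"

text \<open>Committee size n = 3f+1 and threshold t = 2f+1. Wardens are W_0 .. W_(n-1).\<close>
definition nW :: "nat \<Rightarrow> nat" where "nW f = 3 * f + 1"
definition thr :: "nat \<Rightarrow> nat" where "thr f = 2 * f + 1"

text \<open>Signed messages (symbolic, unforgeable signatures; the hash commitment H(s,r)
  is idealised as the pair (s,r), i.e. a collision-free commitment).
  SigUpd p (s,r) i : signature of party p on {H(s,r), i}
  SigSeq p i       : signature of party p on the announcement M = i
  SigOpt p s i     : signature of party p on the optimistic close of state s with sequence number i
  WSig j i         : signature of Warden W_j on M = i\<close>
datatype 's msg =
    SigUpd party "'s \<times> nat" nat
  | SigSeq party nat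
  | SigOpt party 's nat
  | WSig nat nat

text \<open>Global configuration.
  pool     : all signatures produced so far (available to everyone, incl. the adversary;
             asynchronous delivery = honest participants may react to any of them at any later time)
  pcur     : for a party, the sequence number of its latest announced state
  pstop    : party has agreed to an optimistic close (stops updating)
  wstored  : sequence number of the announcement stored by a Warden
  wclosed  : Warden has published its closing announcement
  annc     : closing announcements on chain, pairs (Warden index, sequence number)
  chclosed : Some (s,i) once the channel's funds are spent closing in state s_i = s\<close>
record 's conf =
  pool :: "'s msg set"
  pcur :: "party \<Rightarrow> nat"
  pstop :: "party \<Rightarrow> bool"
  wstored :: "nat \<Rightarrow> nat"
  wclosed :: "nat \<Rightarrow> bool"
  annc :: "(nat \<times> nat) set"
  chclosed :: "('s \<times> nat) option"

definition init_conf :: "'s \<Rightarrow> nat \<Rightarrow> 's conf" where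
  "init_conf s1 r1 =
     \<lparr> pool = {SigUpd PA (s1, r1) 1, SigUpd PB (s1, r1) 1, SigSeq PA 1, SigSeq PB 1},
       pcur = (\<lambda>_. 1), pstop = (\<lambda>_. False), wstored = (\<lambda>_. 0), wclosed = (\<lambda>_. False),
       annc = {}, chclosed = None \<rparr>"

text \<open>Transitions. Byz = set of Byzantine Wardens, BP = set of Byzantine parties.\<close>
inductive step :: "nat \<Rightarrow> nat set \<Rightarrow> party set \<Rightarrow> 's conf \<Rightarrow> 's conf \<Rightarrow> bool"
  for f :: nat and Byz :: "nat set" and BP :: "party set" where
  byz_party_upd: "p \<in> BP \<Longrightarrow> step f Byz BP c (c\<lparr>pool := insert (SigUpd p x i) (pool c)\<rparr>)"
| byz_party_seq: "p \<in> BP \<Longrightarrow> step f Byz BP c (c\<lparr>pool := insert (SigSeq p i) (pool c)\<rparr>)"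
| byz_party_opt: "p \<in> BP \<Longrightarrow> step f Byz BP c (c\<lparr>pool := insert (SigOpt p s i) (pool c)\<rparr>)"
| byz_warden_sig: "j \<in> Byz \<Longrightarrow> step f Byz BP c (c\<lparr>pool := insert (WSig j i) (pool c)\<rparr>)"
| byz_warden_close: "j \<in> Byz \<Longrightarrow> step f Byz BP c (c\<lparr>annc := insert (j, i) (annc c)\<rparr>)"
| hon_party_upd: "\<lbrakk> p \<notin> BP; \<not> pstop c p; pcur c p = k;
      thr f \<le> card {j. j < nW f \<and> WSig j k \<in> pool c};
      \<forall>y. SigUpd p y (Suc k) \<notin> pool c \<rbrakk>
    \<Longrightarrow> step f Byz BP c (c\<lparr>pool := insert (SigUpd p (s, r) (Suc k)) (pool c)\<rparr>)"
| hon_party_seq: "\<lbrakk> p \<notin> BP; \<not> pstop c p; pcur c p = k;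
      SigUpd p x (Suc k) \<in> pool c; SigUpd (other p) x (Suc k) \<in> pool c \<rbrakk>
    \<Longrightarrow> step f Byz BP c (c\<lparr>pool := insert (SigSeq p (Suc k)) (pool c),
                          pcur := (pcur c)(p := Suc k)\<rparr>)"
| hon_party_opt: "\<lbrakk> p \<notin> BP; pcur c p = k; SigUpd p (s, r) k \<in> pool c \<rbrakk>
    \<Longrightarrow> step f Byz BP c (c\<lparr>pool := insert (SigOpt p s k) (pool c),
                          pstop := (pstop c)(p := True)\<rparr>)"
| hon_warden_sig: "\<lbrakk> j < nW f; j \<notin> Byz; \<not> wclosed c j; wstored c j = k;
      SigSeq PA (Suc k) \<in> pool c; SigSeq PB (Suc k) \<in> pool c \<rbrakk>
    \<Longrightarrow> step f Byz BP c (c\<lparr>pool := insert (WSig j (Suc k)) (pool c),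
                          wstored := (wstored c)(j := Suc k)\<rparr>)"
  \<comment> \<open>Honest Warden: on a close() request (which any party may send at any time) publish
      the closing announcement for the stored M and stop signing\<close>
| hon_warden_close: "\<lbrakk> j < nW f; j \<notin> Byz; \<not> wclosed c j \<rbrakk>
    \<Longrightarrow> step f Byz BP c (c\<lparr>annc := insert (j, wstored c j) (annc c),
                          wclosed := (wclosed c)(j := True)\<rparr>)"
| contract_opt: "\<lbrakk> chclosed c = None; SigOpt PA s i \<in> pool c; SigOpt PB s i \<in> pool c \<rbrakk>
    \<Longrightarrow> step f Byz BP c (c\<lparr>chclosed := Some (s, i)\<rparr>)"
| contract_pess: "\<lbrakk> chclosed c = None; Q \<subseteq> annc c; inj_on fst Q; card Q = thr f;
      \<forall>q\<in>Q. fst q < nW f; i = Max (snd ` Q);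
      SigUpd PA (s, r) i \<in> pool c; SigUpd PB (s, r) i \<in> pool c \<rbrakk>
    \<Longrightarrow> step f Byz BP c (c\<lparr>chclosed := Some (s, i)\<rparr>)"

definition reachable :: "nat \<Rightarrow> nat set \<Rightarrow> party set \<Rightarrow> 's \<Rightarrow> nat \<Rightarrow> 's conf \<Rightarrow> bool" where
  "reachable f Byz BP s1 r1 c \<longleftrightarrow> (step f Byz BP)\<^sup>*\<^sup>* (init_conf s1 r1) c"

definition both_signed :: "'s conf \<Rightarrow> 's \<Rightarrow> nat \<Rightarrow> bool" where
  "both_signed c s i \<longleftrightarrow> (\<exists>r. SigUpd PA (s, r) i \<in> pool c \<and> SigUpd PB (s, r) i \<in> pool c)"

definition invalidated :: "'s conf \<Rightarrow> nat \<Rightarrow> bool" where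
  "invalidated c i \<longleftrightarrow> (\<exists>s. chclosed c = Some (s, i - 1)) \<and> i \<ge> 1"

definition valid :: "'s conf \<Rightarrow> 's \<Rightarrow> nat \<Rightarrow> bool" where
  "valid c s i \<longleftrightarrow> both_signed c s i \<and> \<not> (\<exists>s'. both_signed c s' (Suc i)) \<and> \<not> invalidated c i"

text \<open>On-chain states: the initial state (part of the opening transaction) and the closing state.\<close>
definition on_chain :: "'s \<Rightarrow> 's conf \<Rightarrow> 's \<Rightarrow> nat \<Rightarrow> bool" where
  "on_chain s1 c s i \<longleftrightarrow> (s, i) = (s1, 1) \<or> chclosed c = Some (s, i)"

definition committed :: "nat \<Rightarrow> 's \<Rightarrow> 's conf \<Rightarrow> 's \<Rightarrow> nat \<Rightarrow> bool" where
  "committed f s1 c s i \<longleftrightarrow>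
     (both_signed c s i \<and> thr f \<le> card {j. j < nW f \<and> WSig j i \<in> pool c})
     \<or> (valid c s i \<and> on_chain s1 c s i)"

end

theory Submission
  imports Defs
begin

text \<open>
  Every state signed by 2f+1 Wardens was signed by an honest one, and an honest Warden signs an
  announcement only after both parties have announced it. Hence an honest party's current
  state is at least as fresh as every certified state, which settles the optimistic close. For
  the pessimistic close, the 2f+1 closing announcements and the 2f+1 signers of a certified
  state share an honest Warden (since 2(2f+1) > (3f+1) + f), whose stored sequence number bounds
  that state; so the contract's maximum is at least as fresh as every certified state. The
  closing state is unique for its sequence number because an honest party commits to one state
  per sequence number, and it is itself committed: either it is certified, or no successor
  exists, since an honest party commits to a successor only once its current state is certified.
\<close>

abbreviation signers :: "nat \<Rightarrow> 's conf \<Rightarrow> nat \<Rightarrow> nat set" where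
  "signers f c k \<equiv> {j. j < nW f \<and> WSig j k \<in> pool c}"

abbreviation certified :: "nat \<Rightarrow> 's conf \<Rightarrow> nat \<Rightarrow> bool" where
  "certified f c k \<equiv> thr f \<le> card (signers f c k)"

definition commitments_unique :: "party set \<Rightarrow> 's conf \<Rightarrow> bool" where
  "commitments_unique BP c \<longleftrightarrow>
     (\<forall>p x k. p \<notin> BP \<longrightarrow> SigUpd p x k \<in> pool c \<longrightarrow>
        1 \<le> k \<and> (\<forall>y. SigUpd p y k \<in> pool c \<longrightarrow> y = x))"

definition announced_le_current :: "party set \<Rightarrow> 's conf \<Rightarrow> bool" where
  "announced_le_current BP c \<longleftrightarrow>
     (\<forall>p j. p \<notin> BP \<longrightarrow> SigSeq p j \<in> pool c \<longrightarrow> j \<le> pcur c p)"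

definition current_state_agreed :: "party set \<Rightarrow> 's conf \<Rightarrow> bool" where
  "current_state_agreed BP c \<longleftrightarrow>
     (\<forall>p. p \<notin> BP \<longrightarrow>
        (\<exists>x. SigUpd p x (pcur c p) \<in> pool c \<and> SigUpd (other p) x (pcur c p) \<in> pool c))"

definition optimistic_close_final :: "party set \<Rightarrow> 's conf \<Rightarrow> bool" where
  "optimistic_close_final BP c \<longleftrightarrow>
     (\<forall>p s j. p \<notin> BP \<longrightarrow> SigOpt p s j \<in> pool c \<longrightarrow>
        pstop c p \<and> pcur c p = j \<and> (\<exists>r. SigUpd p (s, r) j \<in> pool c))"

definition updates_certified :: "nat \<Rightarrow> party set \<Rightarrow> 's conf \<Rightarrow> bool" where
  "updates_certified f BP c \<longleftrightarrow>
     (\<forall>p x k. p \<notin> BP \<longrightarrow> 1 \<le> k \<longrightarrow> SigUpd p x (Suc k) \<in> pool c \<longrightarrow> certified f c k)"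

definition warden_sigs_announced :: "nat \<Rightarrow> nat set \<Rightarrow> 's conf \<Rightarrow> bool" where
  "warden_sigs_announced f Byz c \<longleftrightarrow>
     (\<forall>w j. w < nW f \<longrightarrow> w \<notin> Byz \<longrightarrow> WSig w j \<in> pool c \<longrightarrow>
        j \<le> wstored c w \<and> SigSeq PA j \<in> pool c \<and> SigSeq PB j \<in> pool c)"

definition closing_announcements_stored :: "nat \<Rightarrow> nat set \<Rightarrow> 's conf \<Rightarrow> bool" where
  "closing_announcements_stored f Byz c \<longleftrightarrow>
     (\<forall>w v. w < nW f \<longrightarrow> w \<notin> Byz \<longrightarrow> (w, v) \<in> annc c \<longrightarrow> wclosed c w \<and> v = wstored c w)"

definition brick_inv :: "nat \<Rightarrow> nat set \<Rightarrow> party set \<Rightarrow> 's conf \<Rightarrow> bool" where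
  "brick_inv f Byz BP c \<longleftrightarrow>
     commitments_unique BP c \<and> announced_le_current BP c \<and> current_state_agreed BP c \<and>
     optimistic_close_final BP c \<and> updates_certified f BP c \<and>
     warden_sigs_announced f Byz c \<and> closing_announcements_stored f Byz c"

lemma brick_inv_init: "brick_inv f Byz BP (init_conf s1 r1)"
  unfolding brick_inv_def commitments_unique_def announced_le_current_def
    current_state_agreed_def optimistic_close_final_def updates_certified_def
    warden_sigs_announced_def closing_announcements_stored_def init_conf_def
  using party.nchotomy by auto

lemma commitments_unique_step:
  "step f Byz BP c c' \<Longrightarrow> commitments_unique BP c \<Longrightarrow> commitments_unique BP c'"
  unfolding commitments_unique_def by (erule step.cases) auto

lemma announced_le_current_step:
  "step f Byz BP c c' \<Longrightarrow> announced_le_current BP c \<Longrightarrow> announced_le_current BP c'"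
  unfolding announced_le_current_def by (erule step.cases) (auto simp: le_Suc_eq)

lemma current_state_agreed_step:
  "step f Byz BP c c' \<Longrightarrow> current_state_agreed BP c \<Longrightarrow> current_state_agreed BP c'"
  unfolding current_state_agreed_def by (erule step.cases) fastforce+

lemma optimistic_close_final_step:
  "step f Byz BP c c' \<Longrightarrow> optimistic_close_final BP c \<Longrightarrow> optimistic_close_final BP c'"
  unfolding optimistic_close_final_def by (erule step.cases) fastforce+

lemma step_pool_mono: "step f Byz BP c c' \<Longrightarrow> pool c \<subseteq> pool c'"
  by (erule step.cases) auto

lemma card_signers_mono:
  "pool c \<subseteq> pool c' \<Longrightarrow> card (signers f c k) \<le> card (signers f c' k)"
  by (rule card_mono) auto

lemma new_honest_commitment:
  assumes "step f Byz BP c c'" and "p \<notin> BP"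
    and "SigUpd p x k \<in> pool c'" and "SigUpd p x k \<notin> pool c"
  shows "k = Suc (pcur c p) \<and> certified f c (pcur c p) \<and> (\<forall>y. SigUpd p y k \<notin> pool c)"
  using assms by cases auto

lemma updates_certified_step:
  assumes step: "step f Byz BP c c'" and inv: "updates_certified f BP c"
  shows "updates_certified f BP c'"
  unfolding updates_certified_def
proof (intro allI impI)
  fix p x k
  assume p: "p \<notin> BP" and k: "1 \<le> k" and signed: "SigUpd p x (Suc k) \<in> pool c'"
  have "certified f c k"
  proof (cases "SigUpd p x (Suc k) \<in> pool c")
    case True
    with inv p k show ?thesis unfolding updates_certified_def by blast
  next
    case False
    with new_honest_commitment[OF step p signed] show ?thesis by simp
  qed
  also have "\<dots> \<le> card (signers f c' k)"
    using step by (intro card_signers_mono step_pool_mono)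
  finally show "certified f c' k" .
qed

lemma warden_sigs_announced_step:
  "step f Byz BP c c' \<Longrightarrow> warden_sigs_announced f Byz c \<Longrightarrow> warden_sigs_announced f Byz c'"
  unfolding warden_sigs_announced_def by (erule step.cases) (auto simp: le_Suc_eq)

lemma closing_announcements_stored_step:
  "step f Byz BP c c' \<Longrightarrow> closing_announcements_stored f Byz c \<Longrightarrow>
   closing_announcements_stored f Byz c'"
  unfolding closing_announcements_stored_def by (erule step.cases) auto

lemma brick_inv_step:
  "step f Byz BP c c' \<Longrightarrow> brick_inv f Byz BP c \<Longrightarrow> brick_inv f Byz BP c'"
  unfolding brick_inv_def
  by (metis commitments_unique_step announced_le_current_step current_state_agreed_step
      optimistic_close_final_step updates_certified_step warden_sigs_announced_step
      closing_announcements_stored_step)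

lemma reachable_brick_inv: "reachable f Byz BP s1 r1 c \<Longrightarrow> brick_inv f Byz BP c"
  unfolding reachable_def
  by (induction rule: rtranclp_induct) (auto intro: brick_inv_init brick_inv_step)

lemma exists_honest_party:
  fixes BP :: "party set"
  assumes "card BP \<le> 1"
  obtains p where "p \<notin> BP"
proof -
  have "BP \<noteq> {PA, PB}" using assms by auto
  then show ?thesis using that party.exhaust by blast
qed

lemma both_signed_by:
  "both_signed c s i \<Longrightarrow> \<exists>r. SigUpd p (s, r) i \<in> pool c"
  unfolding both_signed_def by (cases p) auto

lemma both_signed_unique:
  assumes "commitments_unique BP c" and "p \<notin> BP"
    and "both_signed c s i" and "both_signed c s' i"
  shows "s' = s"
  using assms both_signed_by[of c s i p] both_signed_by[of c s' i p]
  unfolding commitments_unique_def by blast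

lemma quorums_intersect_outside:
  assumes "A \<subseteq> U" "S \<subseteq> U" "finite U" "finite B" "card U + card B < card A + card S"
  shows "\<exists>x\<in>A \<inter> S. x \<notin> B"
proof (rule ccontr)
  assume "\<not> ?thesis"
  then have "card (A \<inter> S) \<le> card B"
    using \<open>finite B\<close> by (intro card_mono) auto
  moreover have "card A + card S = card (A \<union> S) + card (A \<inter> S)"
    using assms(1-3) by (intro card_Un_Int) (auto dest: finite_subset)
  moreover have "card (A \<union> S) \<le> card U"
    using assms(1-3) by (intro card_mono) auto
  ultimately show False using assms(5) by linarith
qed

lemma warden_quorums_share_honest:
  assumes "Byz \<subseteq> {..<nW f}" "card Byz \<le> f"
    and "A \<subseteq> {..<nW f}" "S \<subseteq> {..<nW f}" "thr f \<le> card A" "thr f \<le> card S"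
  shows "\<exists>w\<in>A \<inter> S. w \<notin> Byz"
  using assms by (intro quorums_intersect_outside[of A "{..<nW f}" S])
    (auto simp: nW_def thr_def dest: finite_subset)

lemma certified_le_current:
  assumes "announced_le_current BP c" and "warden_sigs_announced f Byz c" and "p \<notin> BP"
    and "Byz \<subseteq> {..<nW f}" and "card Byz \<le> f" and "certified f c j"
  shows "j \<le> pcur c p"
proof -
  obtain w where "w < nW f" "w \<notin> Byz" "WSig w j \<in> pool c"
    using warden_quorums_share_honest[OF assms(4,5) _ _ assms(6,6)] by auto
  with assms(2) have "SigSeq p j \<in> pool c"
    unfolding warden_sigs_announced_def by (cases p) auto
  with assms(1,3) show ?thesis unfolding announced_le_current_def by blast
qed

lemma certified_le_max_announcement:
  assumes "warden_sigs_announced f Byz c" and "closing_announcements_stored f Byz c"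
    and "Byz \<subseteq> {..<nW f}" and "card Byz \<le> f"
    and "Q \<subseteq> annc c" and "inj_on fst Q" and "card Q = thr f" and "\<forall>q\<in>Q. fst q < nW f"
    and "certified f c j"
  shows "j \<le> Max (snd ` Q)"
proof -
  have "finite Q" using assms(7) card.infinite unfolding thr_def by fastforce
  have "fst ` Q \<subseteq> {..<nW f}" using assms(8) by auto
  moreover have "thr f \<le> card (fst ` Q)" using assms(6,7) by (simp add: card_image)
  ultimately obtain w where w: "w \<in> fst ` Q" "w \<in> signers f c j" "w \<notin> Byz"
    using warden_quorums_share_honest[OF assms(3,4) _ _ _ assms(9)] by blast
  then obtain v where "(w, v) \<in> Q" by auto
  have "j \<le> wstored c w" using assms(1) w unfolding warden_sigs_announced_def by blast
  also have "\<dots> = v"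
    using assms(2,5) w \<open>(w, v) \<in> Q\<close> unfolding closing_announcements_stored_def by blast
  also have "v \<le> Max (snd ` Q)"
    using \<open>(w, v) \<in> Q\<close> \<open>finite Q\<close> by (intro Max_ge) (auto intro: rev_image_eqI)
  finally show ?thesis .
qed

lemma optimistic_close_fresh:
  assumes inv: "brick_inv f Byz BP c" and p: "p \<notin> BP"
    and "Byz \<subseteq> {..<nW f}" and "card Byz \<le> f"
    and "SigOpt PA s i \<in> pool c" and "SigOpt PB s i \<in> pool c"
  shows "both_signed c s i \<and> 1 \<le> i \<and> (\<forall>j. certified f c j \<longrightarrow> j \<le> i)"
proof -
  have "SigOpt p s i \<in> pool c" using assms(5,6) by (cases p) auto
  then obtain r where cur: "pcur c p = i" and own: "SigUpd p (s, r) i \<in> pool c"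
    using inv p unfolding brick_inv_def optimistic_close_final_def by blast
  obtain x where x: "SigUpd p x i \<in> pool c" "SigUpd (other p) x i \<in> pool c"
    using inv p cur unfolding brick_inv_def current_state_agreed_def by blast
  with own inv p have "x = (s, r)" unfolding brick_inv_def commitments_unique_def by blast
  with x have "both_signed c s i" unfolding both_signed_def by (cases p) auto
  moreover have "1 \<le> i" using own inv p unfolding brick_inv_def commitments_unique_def by blast
  moreover have "j \<le> i" if "certified f c j" for j
  proof -
    have "announced_le_current BP c" "warden_sigs_announced f Byz c"
      using inv unfolding brick_inv_def by simp_all
    from certified_le_current[OF this p assms(3,4) that] cur show ?thesis by simp
  qed
  ultimately show ?thesis by blast
qed

lemma pessimistic_close_fresh:
  assumes inv: "brick_inv f Byz BP c" and p: "p \<notin> BP"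
    and "Byz \<subseteq> {..<nW f}" and "card Byz \<le> f"
    and "Q \<subseteq> annc c" and "inj_on fst Q" and "card Q = thr f" and "\<forall>q\<in>Q. fst q < nW f"
    and "i = Max (snd ` Q)" and "SigUpd PA (s, r) i \<in> pool c" and "SigUpd PB (s, r) i \<in> pool c"
  shows "both_signed c s i \<and> 1 \<le> i \<and> (\<forall>j. certified f c j \<longrightarrow> j \<le> i)"
proof -
  have "both_signed c s i" using assms(10,11) unfolding both_signed_def by blast
  moreover have "SigUpd p (s, r) i \<in> pool c" using assms(10,11) by (cases p) auto
  then have "1 \<le> i" using inv p unfolding brick_inv_def commitments_unique_def by blast
  moreover have "j \<le> i" if "certified f c j" for j
  proof -
    have "warden_sigs_announced f Byz c" "closing_announcements_stored f Byz c"
      using inv unfolding brick_inv_def by simp_all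
    from certified_le_max_announcement[OF this assms(3-8) that] assms(9) show ?thesis by simp
  qed
  ultimately show ?thesis by blast
qed

lemma closing_step_fresh:
  assumes "brick_inv f Byz BP c" and "p \<notin> BP"
    and "Byz \<subseteq> {..<nW f}" and "card Byz \<le> f"
    and "step f Byz BP c c'" and "chclosed c = None" and "chclosed c' = Some (s, i)"
  shows "c' = c\<lparr>chclosed := Some (s, i)\<rparr> \<and> both_signed c s i \<and> 1 \<le> i \<and>
    (\<forall>j. certified f c j \<longrightarrow> j \<le> i)"
  using assms(5)
proof cases
  case (contract_opt s' i')
  with assms(7) have "s' = s" "i' = i" by simp_all
  with contract_opt optimistic_close_fresh[OF assms(1-4)] show ?thesis by simp
next
  case (contract_pess Q i' s' r)
  with assms(7) have "s' = s" "i' = i" by simp_all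
  with contract_pess pessimistic_close_fresh[OF assms(1-4)] show ?thesis by blast
qed (use assms(6,7) in simp_all)

lemma closed_state_committed:
  assumes "updates_certified f BP c" and "p \<notin> BP"
    and "both_signed c s i" and "1 \<le> i" and c': "c' = c\<lparr>chclosed := Some (s, i)\<rparr>"
  shows "committed f s1 c' s i"
proof (cases "certified f c i")
  case True
  with assms(3) c' show ?thesis unfolding committed_def both_signed_def by simp
next
  case False
  have "\<not> both_signed c s' (Suc i)" for s'
  proof
    assume "both_signed c s' (Suc i)"
    then obtain r where "SigUpd p (s', r) (Suc i) \<in> pool c"
      using both_signed_by[of c s' "Suc i" p] by blast
    with assms(1,2,4) False show False unfolding updates_certified_def by blast
  qed
  with assms(3,4) c' have "valid c' s i"
    unfolding valid_def invalidated_def both_signed_def by auto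
  with c' show ?thesis unfolding committed_def on_chain_def by simp
qed

lemma committed_after_close:
  assumes "commitments_unique BP c" and "p \<notin> BP"
    and "both_signed c s i" and "1 \<le> i" and fresh: "\<forall>j. certified f c j \<longrightarrow> j \<le> i"
    and c': "c' = c\<lparr>chclosed := Some (s, i)\<rparr>" and "committed f s1 c' s' j"
  shows "j < i \<or> (j = i \<and> s' = s)"
proof -
  \<comment> \<open>a committed state is either certified or on chain, i.e. the initial or the closing state\<close>
  have "both_signed c s' j \<and> j \<le> i"
    using assms(4,7) fresh c'
    unfolding committed_def valid_def on_chain_def both_signed_def by auto
  with both_signed_unique[OF assms(1,2,3)] show ?thesis by fastforce
qed

theorem theorem1:
  fixes f :: nat and Byz :: "nat set" and BP :: "party set"
    and s1 :: 's and r1 :: nat and c c' :: "'s conf" and s :: 's and i :: nat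
  assumes "Byz \<subseteq> {..<nW f}" and "card Byz \<le> f"
    and "card BP \<le> 1"
    and "reachable f Byz BP s1 r1 c"
    and "step f Byz BP c c'"
    and "chclosed c = None" and "chclosed c' = Some (s, i)"
  shows "committed f s1 c' s i \<and>
         (\<forall>s' j. committed f s1 c' s' j \<longrightarrow> j < i \<or> (j = i \<and> s' = s))"
proof -
  have inv: "brick_inv f Byz BP c" using assms(4) by (rule reachable_brick_inv)
  obtain p where p: "p \<notin> BP" using assms(3) by (rule exists_honest_party)
  have c': "c' = c\<lparr>chclosed := Some (s, i)\<rparr>" and signed: "both_signed c s i" and "1 \<le> i"
    and fresh: "\<forall>j. certified f c j \<longrightarrow> j \<le> i"
    using closing_step_fresh[OF inv p assms(1,2,5-7)] by simp_all
  have "updates_certified f BP c" and "commitments_unique BP c"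
    using inv unfolding brick_inv_def by simp_all
  then show ?thesis
    using closed_state_committed[OF _ p signed \<open>1 \<le> i\<close> c']
      committed_after_close[OF _ p signed \<open>1 \<le> i\<close> fresh c'] by blast
qed

end
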